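(* Let $L,M\geq 1$, let $\{u\}_L=\{u_1,\ldots,u_L\}$ and $\{w\}_M=\{w_1,\ldots,w_M\}$ be complex variables, and write $\bar u_l=u_l+\gamma$, $\{\bar u\}_L=\{\bar u_1,\ldots,\bar u_L\}$. To each $u_l$ associate an auxiliary space $V_{a_l}\cong\mathbb{C}^2$ and to each $w_m$ a quantum space $V_m\cong\mathbb{C}^2$. Define $$T\big(\{u\}_L,\{w\}_M\big)=T_{a_L}(u_L,\{w\}_M)\cdots T_{a_1}(u_1,\{w\}_M),$$ an operator on $V_{a_1}\otimes\cdots\otimes V_{a_L}\otimes V_1\otimes\cdots\otimes V_M$. For each $1\le m\le M$ let $T_m(w_m,\{\bar u\}_L)=R_{m a_1}(w_m,\bar u_1)\cdots R_{m a_L}(w_m,\bar u_L)$, regarded as a $2\times 2$ matrix in $V_m$ with entries $A(w_m,\{\bar u\}_L),B(w_m,\{\bar u\}_L),C(w_m,\{\bar u\}_L),D(w_m,\{\bar u\}_L)$ acting on $V_{a_1}\otimes\cdots\otimes V_{a_L}$, and set $$\overline{T}_m(w_m,\{\bar u\}_L)=\begin{pmatrix} D(w_m,\{\bar u\}_L) & -B(w_m,\{\bar u\}_L)\\ -C(w_m,\{\bar u\}_L) & A(w_m,\{\bar u\}_L)\end{pmatrix}_m .$$ Then $$T\big(\{u\}_L,\{w\}_M\big)=(-1)^{LM}\,\overline{T}_1(w_1,\{\bar u\}_L)\cdots \overline{T}_M(w_M,\{\bar u\}_L).$$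
   Context: Notation: $[x]=\sinh x$, and $\gamma$ is a fixed complex parameter. Each space $V_a\cong\mathbb{C}^2$ has basis $\uparrow=(1,0)^{T}$, $\downarrow=(0,1)^{T}$. For two such spaces $V_a,V_b$, the $R$-matrix $R_{ab}(u,v)\in\mathrm{End}(V_a\otimes V_b)$ is, in the ordered basis $(\uparrow\otimes\uparrow,\uparrow\otimes\downarrow,\downarrow\otimes\uparrow,\downarrow\otimes\downarrow)$ (first factor $V_a$), $$R_{ab}(u,v)=\begin{pmatrix}[u-v+\gamma]&0&0&0\\0&[u-v]&[\gamma]&0\\0&[\gamma]&[u-v]&0\\0&0&0&[u-v+\gamma]\end{pmatrix},$$ acting as the identity on all other tensor factors. For an auxiliary space $V_a$ and quantum spaces $V_1,\dots,V_M$, the monodromy matrix is $T_a(u,\{w\}_M)=R_{a1}(u,w_1)\cdots R_{aM}(u,w_M)$; writing it as a $2\times2$ matrix in $V_a$ (rows/columns indexed by $\uparrow,\downarrow$), $T_a(u,\{w\}_M)=\begin{pmatrix}A(u,\{w\}_M)&B(u,\{w\}_M)\\C(u,\{w\}_M)&D(u,\{w\}_M)\end{pmatrix}_a$ with entries acting on $V_1\otimes\cdots\otimes V_M$. The same convention defines $A,B,C,D$ for a monodromy matrix whose auxiliary space is a quantum space $V_m$ and whose "sites" are the spaces $V_{a_1},\dots,V_{a_L}$. *)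

theory Defs
  imports Complex_Main
begin

text \<open>Model of the tensor product of N copies of C^2, sites 0..N-1.
  A basis configuration is a map nat => bool that is False at every site >= N
  (True = up, False = down). An operator is given by its matrix elements
  op s t = <s| op |t>.\<close>

type_synonym cfg = "nat \<Rightarrow> bool"
type_synonym op = "cfg \<Rightarrow> cfg \<Rightarrow> complex"

definition configs :: "nat \<Rightarrow> cfg set" where
  "configs N = {c. \<forall>i\<ge>N. c i = False}"

definition op_id :: op where
  "op_id s t = (if s = t then 1 else 0)"

definition op_mult :: "nat \<Rightarrow> op \<Rightarrow> op \<Rightarrow> op" where
  "op_mult N X Y s t = (\<Sum>r\<in>configs N. X s r * Y r t)"

definition op_scale :: "complex \<Rightarrow> op \<Rightarrow> op" where
  "op_scale c X s t = c * X s t"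

definition op_prod :: "nat \<Rightarrow> op list \<Rightarrow> op" where
  "op_prod N Xs = foldr (op_mult N) Xs op_id"

definition sh :: "complex \<Rightarrow> complex" where
  "sh x = sinh x"

text \<open>4x4 R-matrix entry <a b| R(u,v) |c d>, first factor = site i\<close>
definition Rmat :: "complex \<Rightarrow> complex \<Rightarrow> complex \<Rightarrow> bool \<Rightarrow> bool \<Rightarrow> bool \<Rightarrow> bool \<Rightarrow> complex" where
  "Rmat \<gamma> u v a b c d =
     (if a = c \<and> b = d then (if a = b then sh (u - v + \<gamma>) else sh (u - v))
      else if a \<noteq> b \<and> c = b \<and> d = a then sh \<gamma>
      else 0)"

text \<open>R_{ij}(u,v) acting on sites i,j (i first factor) and as identity elsewhere\<close>
definition Rop :: "complex \<Rightarrow> nat \<Rightarrow> nat \<Rightarrow> complex \<Rightarrow> complex \<Rightarrow> op" where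
  "Rop \<gamma> i j u v s t =
     (if \<forall>k. k \<noteq> i \<and> k \<noteq> j \<longrightarrow> s k = t k
      then Rmat \<gamma> u v (s i) (s j) (t i) (t j) else 0)"

text \<open>entry (s,t) of an operator viewed as a 2x2 matrix in the space at site m;
  the result acts on the remaining sites (site m is set to down)\<close>
definition entry :: "nat \<Rightarrow> op \<Rightarrow> bool \<Rightarrow> bool \<Rightarrow> op" where
  "entry m X a b s t = X (s(m := a)) (t(m := b))"

text \<open>assemble an operator from a 2x2 matrix of operators on the other sites\<close>
definition block :: "nat \<Rightarrow> (bool \<Rightarrow> bool \<Rightarrow> op) \<Rightarrow> op" where
  "block m X s t = X (s m) (t m) (s(m := False)) (t(m := False))"

text \<open>Layout: auxiliary space a_l (l = 1..L) is site l-1, quantum space V_m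
  (m = 1..M) is site L+m-1; parameters are 0-indexed: u 0..L-1, w 0..M-1.\<close>

text \<open>T_{a_l}(u_l,{w}_M) = R_{a_l 1}(u_l,w_1) ... R_{a_l M}(u_l,w_M)\<close>
definition monoA :: "complex \<Rightarrow> nat \<Rightarrow> nat \<Rightarrow> (nat \<Rightarrow> complex) \<Rightarrow> (nat \<Rightarrow> complex) \<Rightarrow> nat \<Rightarrow> op" where
  "monoA \<gamma> L M u w l = op_prod (L + M) (map (\<lambda>m. Rop \<gamma> l (L + m) (u l) (w m)) [0..<M])"

text \<open>T({u}_L,{w}_M) = T_{a_L} ... T_{a_1}\<close>
definition bigT :: "complex \<Rightarrow> nat \<Rightarrow> nat \<Rightarrow> (nat \<Rightarrow> complex) \<Rightarrow> (nat \<Rightarrow> complex) \<Rightarrow> op" where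
  "bigT \<gamma> L M u w = op_prod (L + M) (rev (map (monoA \<gamma> L M u w) [0..<L]))"

text \<open>T_m(w_m,{ubar}_L) = R_{m a_1}(w_m,ubar_1) ... R_{m a_L}(w_m,ubar_L), ubar_l = u_l + gamma\<close>
definition monoQ :: "complex \<Rightarrow> nat \<Rightarrow> nat \<Rightarrow> (nat \<Rightarrow> complex) \<Rightarrow> (nat \<Rightarrow> complex) \<Rightarrow> nat \<Rightarrow> op" where
  "monoQ \<gamma> L M u w m = op_prod (L + M) (map (\<lambda>l. Rop \<gamma> (L + m) l (w m) (u l + \<gamma>)) [0..<L])"

definition monoQbar :: "complex \<Rightarrow> nat \<Rightarrow> nat \<Rightarrow> (nat \<Rightarrow> complex) \<Rightarrow> (nat \<Rightarrow> complex) \<Rightarrow> nat \<Rightarrow> op" where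
  "monoQbar \<gamma> L M u w m =
     (let X = monoQ \<gamma> L M u w m; q = L + m;
          A = entry q X True True; B = entry q X True False;
          C = entry q X False True; D = entry q X False False
      in block q (\<lambda>a b. if a \<and> b then D
                        else if a \<and> \<not> b then op_scale (-1) B
                        else if \<not> a \<and> b then op_scale (-1) C
                        else A))"

end

theory Submission
  imports Defs
begin

text \<open>In site \<open>q\<close>, the bar map \<open>[[A,B],[C,D]] \<mapsto> [[D,-B],[-C,A]]\<close> is the adjugate of a
  2x2 block matrix. Like the adjugate of a product of matrices whose entries commute, it
  reverses the order of a product of factors whose supports meet only in \<open>q\<close>. Crossing
  symmetry of the R-matrix gives \<open>adj\<^sub>m R\<^sub>m\<^sub>a(w, u + \<gamma>) = -R\<^sub>a\<^sub>m(u, w)\<close>, so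
  \<open>T\<^sub>m(w\<^sub>m, {u + \<gamma>})\<close> becomes, up to \<open>(-1)\<^sup>L\<close>, the column product
  \<open>R\<^sub>a\<^sub>L\<^sub>m \<cdots> R\<^sub>a\<^sub>1\<^sub>m\<close>. The product of these columns over \<open>m\<close> rearranges into the
  product of rows \<open>T\<^sub>a\<^sub>L \<cdots> T\<^sub>a\<^sub>1\<close>, because R-matrices sharing no site commute.\<close>

text \<open>Matrix elements outside \<open>configs N\<close> are junk, so operators are compared on
  \<open>configs N\<close> only.\<close>
definition op_eq :: "nat \<Rightarrow> op \<Rightarrow> op \<Rightarrow> bool" where
  "op_eq N X Y \<longleftrightarrow> (\<forall>s\<in>configs N. \<forall>t\<in>configs N. X s t = Y s t)"

lemma op_eq_refl [simp]: "op_eq N X X"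
  by (simp add: op_eq_def)

lemma op_eq_sym: "op_eq N X Y \<Longrightarrow> op_eq N Y X"
  by (simp add: op_eq_def)

lemma op_eq_trans [trans]: "op_eq N X Y \<Longrightarrow> op_eq N Y Z \<Longrightarrow> op_eq N X Z"
  by (simp add: op_eq_def)

lemma finite_configs: "finite (configs N)"
proof -
  have "configs N \<subseteq> (\<lambda>A k. k \<in> A) ` Pow {..<N}"
  proof
    fix c assume "c \<in> configs N"
    then have "{k. c k} \<in> Pow {..<N}"
      by (auto simp: configs_def) (meson not_le)
    moreover have "c = (\<lambda>k. k \<in> {k. c k})" by simp
    ultimately show "c \<in> (\<lambda>A k. k \<in> A) ` Pow {..<N}" by blast
  qed
  then show ?thesis by (rule finite_subset) simp
qed

lemma fun_upd_in_configs: "s \<in> configs N \<Longrightarrow> q < N \<Longrightarrow> s(q := b) \<in> configs N"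
  by (simp add: configs_def)

subsection \<open>The operator algebra\<close>

lemma op_mult_assoc: "op_mult N (op_mult N X Y) Z = op_mult N X (op_mult N Y Z)"
  unfolding op_mult_def
  by (intro ext) (simp add: sum_distrib_left sum_distrib_right mult.assoc, rule sum.swap)

lemma op_mult_cong: "op_eq N X X' \<Longrightarrow> op_eq N Y Y' \<Longrightarrow> op_eq N (op_mult N X Y) (op_mult N X' Y')"
  unfolding op_eq_def op_mult_def by (auto intro!: sum.cong)

lemma op_mult_id_left: "op_eq N (op_mult N op_id X) X"
  unfolding op_eq_def op_mult_def op_id_def
  by (simp add: if_distrib[of "\<lambda>x. x * _"] finite_configs cong: if_cong)

lemma op_mult_id_right: "op_eq N (op_mult N X op_id) X"
  unfolding op_eq_def op_mult_def op_id_def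
  by (simp add: if_distrib[of "\<lambda>x. _ * x"] finite_configs cong: if_cong)

lemma op_prod_Nil [simp]: "op_prod N [] = op_id"
  by (simp add: op_prod_def)

lemma op_prod_Cons [simp]: "op_prod N (X # Xs) = op_mult N X (op_prod N Xs)"
  by (simp add: op_prod_def)

lemma op_prod_append: "op_eq N (op_prod N (Xs @ Ys)) (op_mult N (op_prod N Xs) (op_prod N Ys))"
proof (induction Xs)
  case Nil
  then show ?case using op_eq_sym[OF op_mult_id_left] by simp
next
  case (Cons X Xs)
  then have "op_eq N (op_mult N X (op_prod N (Xs @ Ys)))
      (op_mult N X (op_mult N (op_prod N Xs) (op_prod N Ys)))"
    by (simp add: op_mult_cong)
  then show ?case by (simp add: op_mult_assoc)
qed

lemma op_prod_snoc: "op_eq N (op_prod N (Xs @ [Y])) (op_mult N (op_prod N Xs) Y)"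
  using op_prod_append[of N Xs "[Y]"] op_mult_cong[OF op_eq_refl op_mult_id_right]
  by (auto intro: op_eq_trans)

lemma op_prod_map_cong:
  "(\<And>x. x \<in> set xs \<Longrightarrow> op_eq N (f x) (g x)) \<Longrightarrow>
    op_eq N (op_prod N (map f xs)) (op_prod N (map g xs))"
  by (induction xs) (auto intro: op_mult_cong)

lemma op_prod_map_id: "op_eq N (op_prod N (map (\<lambda>_. op_id) xs)) op_id"
proof (induction xs)
  case (Cons x xs)
  then show ?case
    using op_mult_cong[OF op_eq_refl Cons] op_mult_id_left op_eq_trans by fastforce
qed simp

lemma op_scale_scale: "op_scale a (op_scale b X) = op_scale (a * b) X"
  by (simp add: op_scale_def fun_eq_iff)

lemma op_scale_1: "op_scale 1 X = X"
  by (simp add: op_scale_def fun_eq_iff)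

lemma op_mult_scale_left: "op_mult N (op_scale c X) Y = op_scale c (op_mult N X Y)"
  by (simp add: op_scale_def op_mult_def sum_distrib_left mult.assoc fun_eq_iff)

lemma op_mult_scale_right: "op_mult N X (op_scale c Y) = op_scale c (op_mult N X Y)"
  by (simp add: op_scale_def op_mult_def sum_distrib_left mult.left_commute fun_eq_iff)

lemma op_prod_map_scale:
  "op_prod N (map (\<lambda>x. op_scale c (f x)) xs) = op_scale (c ^ length xs) (op_prod N (map f xs))"
  by (induction xs)
    (simp_all add: op_scale_1 op_mult_scale_left op_mult_scale_right op_scale_scale mult.commute)

subsection \<open>Operators supported on a set of sites\<close>

definition flip :: "cfg \<Rightarrow> cfg \<Rightarrow> cfg" where
  "flip d s = (\<lambda>k. s k \<noteq> d k)"

lemma flip_in_configs: "d \<in> configs N \<Longrightarrow> s \<in> configs N \<Longrightarrow> flip d s \<in> configs N"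
  by (simp add: flip_def configs_def)

lemma flip_flip [simp]: "flip d (flip d s) = s"
  by (auto simp: flip_def fun_eq_iff)

text \<open>Acting as the identity outside \<open>S\<close> means: diagonal in the spins outside \<open>S\<close>, and
  insensitive to flipping them.\<close>
definition supported_on :: "nat \<Rightarrow> nat set \<Rightarrow> op \<Rightarrow> bool" where
  "supported_on N S X \<longleftrightarrow>
    (\<forall>s\<in>configs N. \<forall>t\<in>configs N. X s t \<noteq> 0 \<longrightarrow> (\<forall>k. k \<notin> S \<longrightarrow> s k = t k)) \<and>
    (\<forall>s\<in>configs N. \<forall>t\<in>configs N. \<forall>d\<in>configs N.
       (\<forall>k\<in>S. \<not> d k) \<longrightarrow> X (flip d s) (flip d t) = X s t)"

lemma supported_on_zero:
  "supported_on N S X \<Longrightarrow> s \<in> configs N \<Longrightarrow> t \<in> configs N \<Longrightarrow> k \<notin> S \<Longrightarrow> s k \<noteq> t k \<Longrightarrow>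
    X s t = 0"
  unfolding supported_on_def by blast

lemma supported_on_flip:
  "supported_on N S X \<Longrightarrow> s \<in> configs N \<Longrightarrow> t \<in> configs N \<Longrightarrow> d \<in> configs N \<Longrightarrow>
    (\<And>k. k \<in> S \<Longrightarrow> \<not> d k) \<Longrightarrow> X (flip d s) (flip d t) = X s t"
  unfolding supported_on_def by blast

lemma supported_on_translate:
  assumes X: "supported_on N S X"
    and cfg: "s \<in> configs N" "t \<in> configs N" "s' \<in> configs N" "t' \<in> configs N"
    and inside: "\<And>k. k \<in> S \<Longrightarrow> s' k = s k \<and> t' k = t k"
    and outside: "\<And>k. k \<notin> S \<Longrightarrow> (s' k = s k) = (t' k = t k)"
  shows "X s' t' = X s t"
proof -
  define d where "d = (\<lambda>k. s k \<noteq> s' k)"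
  have d: "d \<in> configs N" using cfg by (auto simp: d_def configs_def)
  have "flip d s = s'" "flip d t = t'"
    using inside outside by (auto simp: flip_def d_def fun_eq_iff)
  moreover have "X (flip d s) (flip d t) = X s t"
    using supported_on_flip[OF X cfg(1,2) d] inside by (simp add: d_def)
  ultimately show ?thesis by simp
qed

lemma supported_on_mono: "supported_on N S X \<Longrightarrow> S \<subseteq> T \<Longrightarrow> supported_on N T X"
  unfolding supported_on_def by blast

lemma supported_on_id: "supported_on N {} op_id"
  unfolding supported_on_def op_id_def flip_def by (auto simp: fun_eq_iff)

lemma supported_on_Rop: "supported_on N {i, j} (Rop \<gamma> i j u v)"
  unfolding supported_on_def Rop_def flip_def by auto

lemma supported_on_mult:
  assumes X: "supported_on N S X" and Y: "supported_on N T Y"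
  shows "supported_on N (S \<union> T) (op_mult N X Y)"
  unfolding supported_on_def
proof (intro conjI ballI impI allI)
  fix s t k assume s: "s \<in> configs N" and t: "t \<in> configs N"
    and "op_mult N X Y s t \<noteq> 0" and k: "k \<notin> S \<union> T"
  then obtain r where r: "r \<in> configs N" and "X s r * Y r t \<noteq> 0"
    unfolding op_mult_def by (meson sum.not_neutral_contains_not_neutral)
  then show "s k = t k"
    using supported_on_zero[OF X s r, of k] supported_on_zero[OF Y r t, of k] k by fastforce
next
  fix s t d assume s: "s \<in> configs N" and t: "t \<in> configs N" and d: "d \<in> configs N"
    and off: "\<forall>k\<in>S \<union> T. \<not> d k"
  have "X s (flip d r) * Y (flip d r) t = X (flip d s) r * Y r (flip d t)"
    if r: "r \<in> configs N" for r
    using supported_on_flip[OF X s flip_in_configs[OF d r] d]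
      supported_on_flip[OF Y flip_in_configs[OF d r] t d] off
    by auto
  then show "op_mult N X Y (flip d s) (flip d t) = op_mult N X Y s t"
    unfolding op_mult_def
    by (intro sum.reindex_bij_witness[where i = "flip d" and j = "flip d"])
      (auto simp: flip_in_configs d)
qed

lemma supported_on_prod:
  "(\<And>X. X \<in> set Xs \<Longrightarrow> supported_on N S X) \<Longrightarrow> supported_on N S (op_prod N Xs)"
proof (induction Xs)
  case Nil
  then show ?case using supported_on_mono[OF supported_on_id] by simp
next
  case (Cons X Xs)
  then show ?case using supported_on_mult[of N S X S] by simp
qed

lemma supported_on_prod_UN:
  "(\<And>i. i \<in> set is \<Longrightarrow> supported_on N (S i) (f i)) \<Longrightarrow>
    supported_on N (\<Union>i\<in>set is. S i) (op_prod N (map f is))"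
  by (rule supported_on_prod) (auto intro: supported_on_mono)

lemma op_mult_disjoint_supports:
  assumes X: "supported_on N S X" and Y: "supported_on N T Y" and disj: "S \<inter> T = {}"
    and s: "s \<in> configs N" and t: "t \<in> configs N"
  defines "r \<equiv> \<lambda>k. if k \<in> S then t k else s k"
  shows "op_mult N X Y s t = X s r * Y r t"
proof -
  have r: "r \<in> configs N" using s t by (auto simp: r_def configs_def)
  have "X s r' * Y r' t = 0" if "r' \<in> configs N - {r}" for r'
  proof (rule ccontr)
    assume "X s r' * Y r' t \<noteq> 0"
    then have "r' k = r k" for k
      using supported_on_zero[OF X s, of r' k] supported_on_zero[OF Y _ t, of r' k] that disj
      by (auto simp: r_def)
    then show False using that by auto
  qed
  then show ?thesis
    unfolding op_mult_def
    by (subst sum.mono_neutral_right[of _ "{r}"]) (auto simp: finite_configs r)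
qed

lemma op_mult_commute_disjoint:
  assumes X: "supported_on N S X" and Y: "supported_on N T Y" and disj: "S \<inter> T = {}"
  shows "op_eq N (op_mult N X Y) (op_mult N Y X)"
  unfolding op_eq_def
proof (intro ballI)
  fix s t assume s: "s \<in> configs N" and t: "t \<in> configs N"
  show "op_mult N X Y s t = op_mult N Y X s t"
  proof (cases "\<forall>k. k \<notin> S \<union> T \<longrightarrow> s k = t k")
    case False
    then obtain k where "k \<notin> S \<union> T" "s k \<noteq> t k" by auto
    then show ?thesis
      using supported_on_zero[OF supported_on_mult[OF X Y] s t]
        supported_on_zero[OF supported_on_mult[OF Y X] s t]
      by (metis Un_commute)
  next
    case True
    define r where "r = (\<lambda>k. if k \<in> S then t k else s k)"
    define r' where "r' = (\<lambda>k. if k \<in> T then t k else s k)"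
    have cfg: "r \<in> configs N" "r' \<in> configs N"
      using s t by (auto simp: r_def r'_def configs_def)
    have "X r' t = X s r"
      by (rule supported_on_translate[OF X s cfg(1) cfg(2) t]) (use True disj in \<open>auto simp: r_def r'_def\<close>)
    moreover have "Y r t = Y s r'"
      by (rule supported_on_translate[OF Y s cfg(2) cfg(1) t]) (use True disj in \<open>auto simp: r_def r'_def\<close>)
    ultimately show ?thesis
      using op_mult_disjoint_supports[OF X Y disj s t] op_mult_disjoint_supports[OF Y X _ s t] disj
      by (simp add: r_def r'_def Int_commute)
  qed
qed

lemma op_prod_mult_interchange:
  assumes "distinct is"
    and "\<And>i. i \<in> set is \<Longrightarrow> supported_on N (SX i) (X i) \<and> supported_on N (SY i) (Y i)"
    and "\<And>i j. i \<in> set is \<Longrightarrow> j \<in> set is \<Longrightarrow> i \<noteq> j \<Longrightarrow> SX j \<inter> SY i = {}"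
  shows "op_eq N (op_prod N (map (\<lambda>i. op_mult N (X i) (Y i)) is))
           (op_mult N (op_prod N (map X is)) (op_prod N (map Y is)))"
  using assms
proof (induction "is")
  case Nil
  then show ?case using op_eq_sym[OF op_mult_id_left] by simp
next
  case (Cons i "is")
  let ?PX = "op_prod N (map X is)" and ?PY = "op_prod N (map Y is)"
  have "supported_on N (\<Union>j\<in>set is. SX j) ?PX"
    using Cons.prems by (intro supported_on_prod_UN) auto
  then have swap: "op_eq N (op_mult N (Y i) ?PX) (op_mult N ?PX (Y i))"
    using Cons.prems by (intro op_mult_commute_disjoint) auto
  have "op_eq N (op_prod N (map (\<lambda>i. op_mult N (X i) (Y i)) (i # is)))
      (op_mult N (op_mult N (X i) (Y i)) (op_mult N ?PX ?PY))"
    using Cons by (auto intro: op_mult_cong)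
  also have "op_mult N (op_mult N (X i) (Y i)) (op_mult N ?PX ?PY)
      = op_mult N (X i) (op_mult N (op_mult N (Y i) ?PX) ?PY)"
    by (simp add: op_mult_assoc)
  also have "op_eq N \<dots> (op_mult N (X i) (op_mult N (op_mult N ?PX (Y i)) ?PY))"
    by (intro op_mult_cong swap op_eq_refl)
  also have "\<dots> = op_mult N (op_prod N (map X (i # is))) (op_prod N (map Y (i # is)))"
    by (simp add: op_mult_assoc)
  finally show ?case .
qed

lemma op_prod_rows_eq_prod_columns:
  assumes "distinct is" "distinct js"
    and "\<And>i j. i \<in> set is \<Longrightarrow> j \<in> set js \<Longrightarrow> supported_on N (S i j) (X i j)"
    and "\<And>i i' j j'. i \<in> set is \<Longrightarrow> i' \<in> set is \<Longrightarrow> j \<in> set js \<Longrightarrow> j' \<in> set js \<Longrightarrow>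
      i \<noteq> i' \<Longrightarrow> j \<noteq> j' \<Longrightarrow> S i j \<inter> S i' j' = {}"
  shows "op_eq N (op_prod N (map (\<lambda>i. op_prod N (map (X i) js)) is))
                 (op_prod N (map (\<lambda>j. op_prod N (map (\<lambda>i. X i j) is)) js))"
  using assms(2-)
proof (induction js)
  case Nil
  then show ?case using op_prod_map_id by simp
next
  case (Cons j js)
  note supp = Cons.prems(2) and disj = Cons.prems(3)
  have "op_eq N (op_prod N (map (\<lambda>i. op_mult N (X i j) (op_prod N (map (X i) js))) is))
     (op_mult N (op_prod N (map (\<lambda>i. X i j) is)) (op_prod N (map (\<lambda>i. op_prod N (map (X i) js)) is)))"
  proof (rule op_prod_mult_interchange[where SX = "\<lambda>i. S i j" and SY = "\<lambda>i. \<Union>j'\<in>set js. S i j'"])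
    show "distinct is" by fact
    show "supported_on N (S i j) (X i j) \<and>
        supported_on N (\<Union>j'\<in>set js. S i j') (op_prod N (map (X i) js))" if "i \<in> set is" for i
      using that supp by (simp add: supported_on_prod_UN)
    show "S i' j \<inter> (\<Union>j'\<in>set js. S i j') = {}" if "i \<in> set is" "i' \<in> set is" "i \<noteq> i'" for i i'
      using that disj Cons.prems(1) by fastforce
  qed
  also have "op_eq N \<dots> (op_mult N (op_prod N (map (\<lambda>i. X i j) is))
      (op_prod N (map (\<lambda>j. op_prod N (map (\<lambda>i. X i j) is)) js)))"
  proof (intro op_mult_cong op_eq_refl Cons.IH)
    show "distinct js" using Cons.prems(1) by simp
  qed (use supp disj in auto)
  finally show ?case by simp
qed

subsection \<open>The adjugate in one site\<close>

definition sign_eq :: "bool \<Rightarrow> bool \<Rightarrow> complex" where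
  "sign_eq a b = (if a = b then 1 else -1)"

definition adj :: "nat \<Rightarrow> op \<Rightarrow> op" where
  "adj q X s t = sign_eq (s q) (t q) * X (s(q := \<not> t q)) (t(q := \<not> s q))"

lemma monoQbar_eq_adj: "monoQbar \<gamma> L M u w m = adj (L + m) (monoQ \<gamma> L M u w m)"
  unfolding monoQbar_def adj_def block_def entry_def op_scale_def sign_eq_def Let_def
  by (intro ext) auto

lemma adj_cong: "op_eq N X Y \<Longrightarrow> q < N \<Longrightarrow> op_eq N (adj q X) (adj q Y)"
  unfolding op_eq_def adj_def by (simp add: fun_upd_in_configs)

lemma adj_id: "adj q op_id = op_id"
proof (intro ext)
  fix s t :: cfg
  have "s(q := \<not> t q) = t(q := \<not> s q) \<longleftrightarrow> s = t"
  proof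
    assume eq: "s(q := \<not> t q) = t(q := \<not> s q)"
    have "s k = t k" for k
      using fun_cong[OF eq, of k] fun_cong[OF eq, of q] by (cases "k = q") auto
    then show "s = t" ..
  qed simp
  then show "adj q op_id s t = op_id s t"
    by (auto simp: adj_def op_id_def sign_eq_def)
qed

lemma sign_eq_mult: "sign_eq a (\<not> c) * sign_eq (\<not> c) b = sign_eq a b"
  by (cases a; cases b; cases c) (simp_all add: sign_eq_def)

text \<open>The involution of intermediate configurations underlying \<open>adj_mult\<close>.\<close>
definition adj_partner :: "nat \<Rightarrow> cfg \<Rightarrow> cfg \<Rightarrow> cfg \<Rightarrow> cfg" where
  "adj_partner q s t r = (\<lambda>k. if k = q then \<not> r q else (t k \<noteq> r k) \<noteq> s k)"

lemma adj_mult_term: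
  assumes X: "supported_on N A X" and Y: "supported_on N B Y" and AB: "A \<inter> B \<subseteq> {q}"
    and q: "q < N" and s: "s \<in> configs N" and t: "t \<in> configs N" and r: "r \<in> configs N"
  defines "r' \<equiv> adj_partner q s t r"
  shows "adj q Y s r' * adj q X r' t
    = sign_eq (s q) (t q) * (X (s(q := \<not> t q)) r * Y r (t(q := \<not> s q)))"
proof -
  have r'q: "r' q = (\<not> r q)" and r'k: "\<And>k. k \<noteq> q \<Longrightarrow> r' k = ((t k \<noteq> r k) \<noteq> s k)"
    by (simp_all add: r'_def adj_partner_def)
  have r'C: "r' \<in> configs N" using s t r q by (auto simp: configs_def r'_def adj_partner_def)
  have upd: "s(q := c) \<in> configs N" "t(q := c) \<in> configs N" "r'(q := c) \<in> configs N" for c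
    using s t r'C q by (simp_all add: fun_upd_in_configs)
  have lhs: "adj q Y s r' * adj q X r' t = sign_eq (s q) (t q) *
      (X (r'(q := \<not> t q)) (t(q := r q)) * Y (s(q := r q)) (r'(q := \<not> s q)))"
    unfolding adj_def r'q sign_eq_mult[of "s q" "r q" "t q", symmetric] by (simp add: mult_ac)
  show ?thesis
  proof (cases "(\<forall>k. k \<notin> A \<longrightarrow> k \<noteq> q \<longrightarrow> r k = s k) \<and> (\<forall>k. k \<notin> B \<longrightarrow> k \<noteq> q \<longrightarrow> r k = t k)")
    case True
    have "X (r'(q := \<not> t q)) (t(q := r q)) = X (s(q := \<not> t q)) r"
      by (rule supported_on_translate[OF X upd(1) r upd(3,2)]) (use True AB in \<open>auto simp: r'k\<close>)
    moreover have "Y (s(q := r q)) (r'(q := \<not> s q)) = Y r (t(q := \<not> s q))"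
      by (rule supported_on_translate[OF Y r upd(2,1,3)]) (use True AB in \<open>auto simp: r'k\<close>)
    ultimately show ?thesis unfolding lhs by simp
  next
    case False
    then consider k where "k \<notin> A" "k \<noteq> q" "r k \<noteq> s k" | k where "k \<notin> B" "k \<noteq> q" "r k \<noteq> t k"
      by blast
    then show ?thesis
    proof cases
      case 1
      then have "X (s(q := \<not> t q)) r = 0" "X (r'(q := \<not> t q)) (t(q := r q)) = 0"
        using supported_on_zero[OF X upd(1) r 1(1)] supported_on_zero[OF X upd(3,2) 1(1)]
        by (auto simp: r'k)
      then show ?thesis unfolding lhs by simp
    next
      case 2
      then have "Y r (t(q := \<not> s q)) = 0" "Y (s(q := r q)) (r'(q := \<not> s q)) = 0"
        using supported_on_zero[OF Y r upd(2) 2(1)] supported_on_zero[OF Y upd(1,3) 2(1)]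
        by (auto simp: r'k)
      then show ?thesis unfolding lhs by simp
    qed
  qed
qed

lemma adj_mult:
  assumes X: "supported_on N A X" and Y: "supported_on N B Y" and AB: "A \<inter> B \<subseteq> {q}"
    and q: "q < N"
  shows "op_eq N (adj q (op_mult N X Y)) (op_mult N (adj q Y) (adj q X))"
  unfolding op_eq_def
proof (intro ballI)
  fix s t assume s: "s \<in> configs N" and t: "t \<in> configs N"
  let ?p = "adj_partner q s t"
  have "?p r \<in> configs N" if "r \<in> configs N" for r
    using that s t q by (auto simp: configs_def adj_partner_def)
  moreover have "?p (?p r) = r" for r
    by (auto simp: adj_partner_def fun_eq_iff)
  ultimately have "(\<Sum>r\<in>configs N. sign_eq (s q) (t q) * (X (s(q := \<not> t q)) r * Y r (t(q := \<not> s q))))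
      = (\<Sum>r\<in>configs N. adj q Y s r * adj q X r t)"
    using adj_mult_term[OF X Y AB q s t]
    by (intro sum.reindex_bij_witness[where i = ?p and j = ?p]) auto
  then show "adj q (op_mult N X Y) s t = op_mult N (adj q Y) (adj q X) s t"
    unfolding adj_def op_mult_def by (simp add: sum_distrib_left)
qed

lemma adj_prod:
  assumes "distinct ls" "q \<notin> set ls" "q < N"
    and "\<And>l. l \<in> set ls \<Longrightarrow> supported_on N {q, l} (f l)"
  shows "op_eq N (adj q (op_prod N (map f ls))) (op_prod N (rev (map (\<lambda>l. adj q (f l)) ls)))"
  using assms
proof (induction ls rule: rev_induct)
  case Nil
  then show ?case by (simp add: adj_id)
next
  case (snoc l ls)
  have P: "supported_on N (insert q (set ls)) (op_prod N (map f ls))"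
    using snoc.prems by (intro supported_on_prod) (auto intro: supported_on_mono)
  have "op_eq N (adj q (op_prod N (map f (ls @ [l])))) (adj q (op_mult N (op_prod N (map f ls)) (f l)))"
    using op_prod_snoc \<open>q < N\<close> by (simp add: adj_cong)
  also have "op_eq N \<dots> (op_mult N (adj q (f l)) (adj q (op_prod N (map f ls))))"
    using snoc.prems by (intro adj_mult[OF P]) auto
  also have "op_eq N \<dots> (op_mult N (adj q (f l)) (op_prod N (rev (map (\<lambda>l. adj q (f l)) ls))))"
    using snoc by (intro op_mult_cong op_eq_refl) auto
  finally show ?case by simp
qed

subsection \<open>Crossing symmetry\<close>

lemma sh_neg: "sh (- x) = - sh x"
  by (simp add: sh_def sinh_minus)

lemma Rmat_crossing:
  "sign_eq b d * Rmat \<gamma> w (u + \<gamma>) (\<not> d) a (\<not> b) c = - Rmat \<gamma> u w a b c d"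
proof -
  have "sh (w - (u + \<gamma>) + \<gamma>) = sh (- (u - w))" "sh (w - (u + \<gamma>)) = sh (- (u - w + \<gamma>))"
    "sh (w - u) = sh (- (u - w))"
    by (simp_all add: algebra_simps)
  then have sh_swap: "sh (w - (u + \<gamma>) + \<gamma>) = - sh (u - w)"
    "sh (w - (u + \<gamma>)) = - sh (u - w + \<gamma>)" "sh (w - u) = - sh (u - w)"
    by (simp_all only: sh_neg)
  show ?thesis
    unfolding Rmat_def sign_eq_def
    by (cases a; cases b; cases c; cases d) (simp_all only: sh_swap simp_thms if_True if_False, simp_all)
qed

lemma adj_Rop:
  assumes "q \<noteq> a"
  shows "adj q (Rop \<gamma> q a w (u + \<gamma>)) = op_scale (-1) (Rop \<gamma> a q u w)"
proof (intro ext)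
  fix s t
  have "(\<forall>k. k \<noteq> q \<and> k \<noteq> a \<longrightarrow> (s(q := \<not> t q)) k = (t(q := \<not> s q)) k)
      \<longleftrightarrow> (\<forall>k. k \<noteq> a \<and> k \<noteq> q \<longrightarrow> s k = t k)"
    by (auto simp del: fun_upd_apply) (metis fun_upd_other)+
  moreover have "(s(q := \<not> t q)) a = s a" "(t(q := \<not> s q)) a = t a"
    using assms by simp_all
  ultimately show "adj q (Rop \<gamma> q a w (u + \<gamma>)) s t = op_scale (-1) (Rop \<gamma> a q u w) s t"
    unfolding adj_def Rop_def op_scale_def fun_upd_same
    using Rmat_crossing[of "s q" "t q" \<gamma> w u "s a" "t a"] by (simp; blast)
qed

subsection \<open>Rows and columns of the R-matrix grid\<close>

lemma bigT_eq_prod_columns: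
  "op_eq (L + M) (bigT \<gamma> L M u w)
     (op_prod (L + M) (map (\<lambda>m. op_prod (L + M)
        (map (\<lambda>l. Rop \<gamma> l (L + m) (u l) (w m)) (rev [0..<L]))) [0..<M]))"
proof -
  have rows: "bigT \<gamma> L M u w = op_prod (L + M) (map (\<lambda>l. op_prod (L + M)
      (map (\<lambda>m. Rop \<gamma> l (L + m) (u l) (w m)) [0..<M])) (rev [0..<L]))"
    unfolding bigT_def rev_map
    by (intro arg_cong[where f = "op_prod (L + M)"] map_cong) (simp_all add: monoA_def)
  show ?thesis
    unfolding rows
  proof (rule op_prod_rows_eq_prod_columns[where S = "\<lambda>l m. {l, L + m}"])
    show "{l, L + m} \<inter> {l', L + m'} = {}"
      if "l \<in> set (rev [0..<L])" "l' \<in> set (rev [0..<L])" "l \<noteq> l'" "m \<noteq> m'" for l l' m m'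
      using that by auto
    show "supported_on (L + M) {l, L + m} (Rop \<gamma> l (L + m) (u l) (w m))" for l m
      by (rule supported_on_Rop)
  qed (simp_all only: distinct_rev distinct_upt)
qed

lemma monoQbar_eq_column:
  fixes \<gamma> :: complex and u w :: "nat \<Rightarrow> complex"
  assumes "m < M"
  shows "op_eq (L + M) (monoQbar \<gamma> L M u w m)
    (op_scale ((-1) ^ L) (op_prod (L + M) (map (\<lambda>l. Rop \<gamma> l (L + m) (u l) (w m)) (rev [0..<L]))))"
proof -
  have crossed: "rev (map (\<lambda>l. adj (L + m) (Rop \<gamma> (L + m) l (w m) (u l + \<gamma>))) [0..<L])
      = map (\<lambda>l. op_scale (-1) (Rop \<gamma> l (L + m) (u l) (w m))) (rev [0..<L])"
    by (simp add: rev_map adj_Rop)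
  have "op_eq (L + M) (monoQbar \<gamma> L M u w m)
      (op_prod (L + M) (map (\<lambda>l. op_scale (-1) (Rop \<gamma> l (L + m) (u l) (w m))) (rev [0..<L])))"
    unfolding monoQbar_eq_adj monoQ_def crossed[symmetric]
    by (rule adj_prod) (use assms in \<open>auto simp: supported_on_Rop\<close>)
  then show ?thesis
    by (simp only: op_prod_map_scale length_rev length_upt diff_zero)
qed

theorem lemma4:
  fixes \<gamma> :: complex and L M :: nat and u w :: "nat \<Rightarrow> complex"
  assumes "L \<ge> 1" and "M \<ge> 1"
  shows "\<forall>s\<in>configs (L + M). \<forall>t\<in>configs (L + M).
           bigT \<gamma> L M u w s t =
           op_scale ((-1) ^ (L * M))
             (op_prod (L + M) (map (monoQbar \<gamma> L M u w) [0..<M])) s t"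
proof -
  let ?column = "\<lambda>m. op_prod (L + M) (map (\<lambda>l. Rop \<gamma> l (L + m) (u l) (w m)) (rev [0..<L]))"
  let ?sign = "(-1::complex) ^ (L * M)"
  have "op_eq (L + M) (op_prod (L + M) (map (monoQbar \<gamma> L M u w) [0..<M]))
      (op_scale (((-1) ^ L) ^ M) (op_prod (L + M) (map ?column [0..<M])))"
    using op_prod_map_cong[of "[0..<M]" "L + M", OF monoQbar_eq_column]
    by (simp add: op_prod_map_scale)
  then have "op_eq (L + M) (op_scale ?sign (op_prod (L + M) (map (monoQbar \<gamma> L M u w) [0..<M])))
      (op_scale (?sign * ?sign) (op_prod (L + M) (map ?column [0..<M])))"
    by (auto simp: op_eq_def op_scale_def power_mult)
  moreover have "?sign * ?sign = 1"
    by (simp add: power_mult_distrib[symmetric])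
  ultimately show ?thesis
    using bigT_eq_prod_columns[where \<gamma> = \<gamma> and u = u and w = w]
    by (simp add: op_eq_def op_scale_1)
qed

end
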